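(* $f_3(5,3)=\frac{15}{8}=\rho_3(C_5\vee I_3)$, where $C_5\vee I_3$ is the join of the $5$-cycle with an independent set of $3$ vertices.
   Context: $\mathcal{G}(\Delta,\omega)$ denotes the class of finite simple graphs $G$ with maximum degree $\Delta(G)\le\Delta$ and clique number $\omega(G)\le\omega$. $k_t(G)$ is the number of copies of $K_t$ in $G$ and $\rho_t(G)=k_t(G)/|V(G)|$. $f_t(\Delta,\omega)=\sup\{\rho_t(G): G\in\mathcal{G}(\Delta,\omega),\ |V(G)|\ge 1\}$. The join $A\vee B$ of two vertex-disjoint graphs is their disjoint union together with all edges between $V(A)$ and $V(B)$. *)

theory Defs
  imports Complex_Main
begin

text \<open>A finite simple graph on natural-number vertices: a vertex set V and a set E of
  2-element subsets of V (edges).  Every finite simple graph is isomorphic to one of these.\<close>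

type_synonym graph = "nat set \<times> nat set set"

definition verts :: "graph \<Rightarrow> nat set" where "verts G = fst G"
definition edges :: "graph \<Rightarrow> nat set set" where "edges G = snd G"

definition simple_graph :: "graph \<Rightarrow> bool" where
  "simple_graph G \<longleftrightarrow> finite (verts G) \<and>
     (\<forall>e\<in>edges G. card e = 2 \<and> e \<subseteq> verts G)"

definition degree :: "graph \<Rightarrow> nat \<Rightarrow> nat" where
  "degree G v = card {e \<in> edges G. v \<in> e}"

definition max_degree :: "graph \<Rightarrow> nat" where
  "max_degree G = Max (insert 0 (degree G ` verts G))"

definition is_clique :: "graph \<Rightarrow> nat set \<Rightarrow> bool" where
  "is_clique G S \<longleftrightarrow> S \<subseteq> verts G \<and>
     (\<forall>u\<in>S. \<forall>v\<in>S. u \<noteq> v \<longrightarrow> {u, v} \<in> edges G)"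

definition clique_number :: "graph \<Rightarrow> nat" where
  "clique_number G = Max {card S | S. is_clique G S}"

definition k_t :: "nat \<Rightarrow> graph \<Rightarrow> nat" where
  "k_t t G = card {S. is_clique G S \<and> card S = t}"

definition rho :: "nat \<Rightarrow> graph \<Rightarrow> real" where
  "rho t G = real (k_t t G) / real (card (verts G))"

definition graph_class :: "nat \<Rightarrow> nat \<Rightarrow> graph set" where
  "graph_class \<Delta> \<omega> = {G. simple_graph G \<and> max_degree G \<le> \<Delta> \<and> clique_number G \<le> \<omega>}"

definition f_t :: "nat \<Rightarrow> nat \<Rightarrow> nat \<Rightarrow> real" where
  "f_t t \<Delta> \<omega> = Sup {rho t G | G. G \<in> graph_class \<Delta> \<omega> \<and> card (verts G) \<ge> 1}"

text \<open>Join of two (vertex-disjoint) graphs.\<close>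
definition join :: "graph \<Rightarrow> graph \<Rightarrow> graph" where
  "join A B = (verts A \<union> verts B,
     edges A \<union> edges B \<union> {{a, b} | a b. a \<in> verts A \<and> b \<in> verts B})"

definition C5 :: graph where
  "C5 = ({0..4}, {{i, (i + 1) mod 5} | i. i < 5})"

definition I3 :: graph where
  "I3 = ({5, 6, 7}, {})"

end

theory Submission
  imports Defs "HOL-Combinatorics.Multiset_Permutations"
begin

text \<open>Count, for each vertex v, the ordered pairs of adjacent neighbours of v; summed over
  all vertices this counts every triangle 6 times. If the maximum degree is at most 5 and there
  is no K_4, the neighbourhood of v spans a triangle-free graph on at most 5 vertices, which by
  Mantel's theorem has at most 6 edges, with equality only for K_{2,3}. So every vertex
  contributes at most 12, and, the count being even, at most 10 unless its link is K_{2,3}.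
  A vertex whose link is K_{2,3} has the three vertices of the larger part contributing at most
  10; as these have degree at most 5, double counting shows that the set F of vertices with
  contribution 12 and the set M of the others satisfy 3|F| \<le> 5|M|. Hence
  6 k_3 \<le> 12|F| + 10|M| \<le> 90 n / 8. The join of C_5 with I_3 is 5-regular, has no K_4,
  and has 8 vertices and 15 triangles, so the bound is attained.\<close>

definition adj :: "graph \<Rightarrow> nat \<Rightarrow> nat \<Rightarrow> bool" where
  "adj G u v \<longleftrightarrow> {u, v} \<in> edges G"

definition nbrs :: "graph \<Rightarrow> nat \<Rightarrow> nat set" where
  "nbrs G v = {u. adj G v u}"

definition adj_pairs :: "graph \<Rightarrow> nat set \<Rightarrow> (nat \<times> nat) set" where
  "adj_pairs G S = {(p, q). p \<in> S \<and> q \<in> S \<and> adj G p q}"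

text \<open>Twice the number of triangles containing v.\<close>
definition link_size :: "graph \<Rightarrow> nat \<Rightarrow> nat" where
  "link_size G v = card (adj_pairs G (nbrs G v))"

definition induces_complete_bipartite :: "graph \<Rightarrow> nat set \<Rightarrow> nat set \<Rightarrow> bool" where
  "induces_complete_bipartite G A B \<longleftrightarrow> A \<inter> B = {} \<and> (\<forall>p\<in>A. \<forall>q\<in>B. adj G p q) \<and>
     (\<forall>p\<in>A. \<forall>q\<in>A. \<not> adj G p q) \<and> (\<forall>p\<in>B. \<forall>q\<in>B. \<not> adj G p q)"

lemma adj_sym: "adj G u v = adj G v u"
  by (simp add: adj_def insert_commute)

lemma adjD:
  assumes "simple_graph G" "adj G u v"
  shows "u \<noteq> v" "u \<in> verts G" "v \<in> verts G"
proof -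
  have "card {u, v} = 2" "{u, v} \<subseteq> verts G"
    using assms by (auto simp: simple_graph_def adj_def)
  then show "u \<noteq> v" "u \<in> verts G" "v \<in> verts G"
    by (auto split: if_splits)
qed

lemma adj_iff_in_nbrs: "adj G u v \<longleftrightarrow> v \<in> nbrs G u"
  by (simp add: nbrs_def)

lemma finite_verts: "simple_graph G \<Longrightarrow> finite (verts G)"
  by (simp add: simple_graph_def)

lemma nbrs_subset_verts: "simple_graph G \<Longrightarrow> nbrs G v \<subseteq> verts G"
  using adjD unfolding nbrs_def by blast

lemma finite_nbrs: "simple_graph G \<Longrightarrow> finite (nbrs G v)"
  using nbrs_subset_verts finite_verts finite_subset by blast

lemma card_nbrs_eq_degree:
  assumes "simple_graph G"
  shows "card (nbrs G v) = degree G v"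
proof -
  have "bij_betw (\<lambda>u. {v, u}) (nbrs G v) {e \<in> edges G. v \<in> e}"
  proof (rule bij_betwI')
    fix e assume e: "e \<in> {e \<in> edges G. v \<in> e}"
    then obtain x y where "e = {x, y}"
      using assms by (auto simp: simple_graph_def card_2_iff)
    with e show "\<exists>u\<in>nbrs G v. e = {v, u}"
      by (auto simp: nbrs_def adj_def insert_commute)
  qed (auto simp: nbrs_def adj_def doubleton_eq_iff)
  then show ?thesis
    by (simp add: bij_betw_same_card degree_def)
qed

lemma card_nbrs_le_max_degree:
  assumes "simple_graph G"
  shows "card (nbrs G v) \<le> max_degree G"
proof (cases "v \<in> verts G")
  case True
  then have "degree G v \<le> max_degree G"
    unfolding max_degree_def using finite_verts[OF assms] by (intro Max_ge) auto
  then show ?thesis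
    using card_nbrs_eq_degree[OF assms] by simp
next
  case False
  then have "nbrs G v = {}"
    using adjD[OF assms] by (auto simp: nbrs_def)
  then show ?thesis by simp
qed

lemma is_clique_iff_adj: "is_clique G S \<longleftrightarrow> S \<subseteq> verts G \<and> (\<forall>u\<in>S. \<forall>v\<in>S. u \<noteq> v \<longrightarrow> adj G u v)"
  by (simp add: is_clique_def adj_def)

lemma finite_clique_sizes:
  assumes "simple_graph G"
  shows "finite {card S | S. is_clique G S}"
proof -
  have "{card S | S. is_clique G S} \<subseteq> card ` Pow (verts G)"
    by (auto simp: is_clique_def)
  then show ?thesis
    using finite_verts[OF assms] finite_subset by blast
qed

lemma card_clique_le_clique_number:
  assumes "simple_graph G" "is_clique G S"
  shows "card S \<le> clique_number G"
  unfolding clique_number_def using finite_clique_sizes[OF assms(1)] assms(2) by (intro Max_ge) auto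

lemma clique_number_le:
  assumes "simple_graph G" "\<And>S. is_clique G S \<Longrightarrow> card S \<le> k"
  shows "clique_number G \<le> k"
  unfolding clique_number_def
proof (rule Max.boundedI)
  have "is_clique G {}"
    by (simp add: is_clique_def)
  then show "{card S | S. is_clique G S} \<noteq> {}"
    by blast
qed (use finite_clique_sizes[OF assms(1)] assms(2) in auto)

lemma max_degree_le:
  assumes "simple_graph G" "\<And>v. card (nbrs G v) \<le> k"
  shows "max_degree G \<le> k"
  unfolding max_degree_def using assms card_nbrs_eq_degree[OF assms(1)]
  by (intro Max.boundedI) (auto simp: finite_verts)

lemma nbrs_triangle_free:
  assumes "simple_graph G" "clique_number G \<le> 3"
    and "p \<in> nbrs G v" "q \<in> nbrs G v" "r \<in> nbrs G v" "adj G p q" "adj G p r" "adj G q r"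
  shows False
proof -
  have "is_clique G {v, p, q, r}"
    using assms adjD[OF assms(1)] adj_sym[of G]
    by (auto simp: is_clique_def nbrs_def adj_def)
  moreover have "card {v, p, q, r} = 4"
    using assms adjD[OF assms(1)] adj_sym[of G] by (auto simp: nbrs_def)
  ultimately show False
    using card_clique_le_clique_number[OF assms(1)] assms(2) by fastforce
qed

lemma adj_pairs_eq_Sigma: "adj_pairs G S = Sigma S (\<lambda>p. nbrs G p \<inter> S)"
  by (auto simp: adj_pairs_def nbrs_def)

lemma finite_adj_pairs: "finite S \<Longrightarrow> finite (adj_pairs G S)"
  by (simp add: adj_pairs_eq_Sigma)

lemma card_adj_pairs: "finite S \<Longrightarrow> card (adj_pairs G S) = (\<Sum>p\<in>S. card (nbrs G p \<inter> S))"
  by (simp add: adj_pairs_eq_Sigma)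

lemma even_card_sym_irrefl:
  fixes R :: "('a::linorder \<times> 'a) set"
  assumes "finite R" "\<And>p q. (p, q) \<in> R \<Longrightarrow> (q, p) \<in> R" "\<And>p. (p, p) \<notin> R"
  shows "even (card R)"
proof -
  let ?R\<^sub>1 = "{x \<in> R. fst x < snd x}"
  have "R = ?R\<^sub>1 \<union> prod.swap ` ?R\<^sub>1"
    using assms(2,3) by (auto simp: image_iff) (metis linorder_neqE)
  moreover have "card (?R\<^sub>1 \<union> prod.swap ` ?R\<^sub>1) = card ?R\<^sub>1 + card (prod.swap ` ?R\<^sub>1)"
    using assms(1) by (intro card_Un_disjoint) auto
  moreover have "card (prod.swap ` ?R\<^sub>1) = card ?R\<^sub>1"
    by (rule card_image) simp
  ultimately show ?thesis by simp
qed

lemma even_card_adj_pairs: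
  assumes "simple_graph G" "finite S"
  shows "even (card (adj_pairs G S))"
  using assms adjD(1)[OF assms(1)]
  by (intro even_card_sym_irrefl) (auto simp: adj_pairs_eq_Sigma nbrs_def adj_sym)

lemma induces_complete_bipartite_sym:
  "induces_complete_bipartite G A B \<Longrightarrow> induces_complete_bipartite G B A"
  unfolding induces_complete_bipartite_def by (metis adj_sym inf_commute)

lemma nbrs_inter_complete_bipartite:
  assumes "induces_complete_bipartite G A B" "p \<in> A"
  shows "nbrs G p \<inter> (A \<union> B) = B"
  using assms by (auto simp: induces_complete_bipartite_def nbrs_def)

text \<open>Mantel's theorem with its extremal structure: split S into the neighbourhood A of a
  vertex x of maximal degree inside S (independent, as S has no triangle) and the rest B.
  Vertices of A only see B and vertices of B see at most card A vertices of S.\<close>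
lemma triangle_free_split:
  assumes "finite S"
    and triangle_free: "\<And>p q r. \<lbrakk>p \<in> S; q \<in> S; r \<in> S; adj G p q; adj G p r; adj G q r\<rbrakk> \<Longrightarrow> False"
  obtains A B where "A \<union> B = S" "A \<inter> B = {}" "card (adj_pairs G S) \<le> 2 * card A * card B"
    "card (adj_pairs G S) = 2 * card A * card B \<Longrightarrow> induces_complete_bipartite G A B"
proof (cases "S = {}")
  case True
  then show ?thesis using that[of "{}" "{}"] by (simp add: adj_pairs_def induces_complete_bipartite_def)
next
  case False
  define d where "d p = card (nbrs G p \<inter> S)" for p
  obtain x where x: "x \<in> S" and x_max: "\<And>p. p \<in> S \<Longrightarrow> d p \<le> d x"
  proof -
    have "Max (d ` S) \<in> d ` S"
      using \<open>finite S\<close> False by (intro Max_in) auto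
    then obtain x where "x \<in> S" "Max (d ` S) = d x"
      by auto
    moreover have "d p \<le> Max (d ` S)" if "p \<in> S" for p
      using \<open>finite S\<close> that by simp
    ultimately show thesis
      using that by metis
  qed
  define A where "A = nbrs G x \<inter> S"
  define B where "B = S - A"
  have AB: "A \<union> B = S" "A \<inter> B = {}" and fin: "finite A" "finite B"
    using \<open>finite S\<close> by (auto simp: A_def B_def)
  have A_indep: "\<not> adj G p q" if "p \<in> A" "q \<in> A" for p q
    using triangle_free[of x p q] x that by (auto simp: A_def nbrs_def)
  have nbrs_A: "nbrs G p \<inter> S \<subseteq> B" if "p \<in> A" for p
    using A_indep that by (auto simp: B_def nbrs_def)
  have dA: "d p \<le> card B" if "p \<in> A" for p
    unfolding d_def using fin(2) nbrs_A[OF that] by (rule card_mono)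
  have dB: "d p \<le> card A" if "p \<in> B" for p
    using x_max[of p] that by (simp add: A_def B_def d_def)
  have pairs: "card (adj_pairs G S) = (\<Sum>p\<in>A. d p) + (\<Sum>p\<in>B. d p)"
    using card_adj_pairs[OF \<open>finite S\<close>] sum.union_disjoint[OF fin AB(2)] AB(1) by (simp add: d_def)
  have sA: "(\<Sum>p\<in>A. d p) \<le> card A * card B" and sB: "(\<Sum>p\<in>B. d p) \<le> card A * card B"
    using sum_bounded_above[of A d "card B"] sum_bounded_above[of B d "card A"] dA dB
    by (auto simp: mult.commute)
  show ?thesis
  proof (rule that[OF AB])
    show "card (adj_pairs G S) \<le> 2 * card A * card B"
      using pairs sA sB by linarith
    assume tight: "card (adj_pairs G S) = 2 * card A * card B"
    then have "card (adj_pairs G S) = 2 * (card A * card B)"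
      by (simp add: mult.assoc)
    then have "(\<Sum>p\<in>A. d p) = card A * card B" "(\<Sum>p\<in>B. d p) = card A * card B"
      using pairs sA sB by linarith+
    then have sA_eq: "(\<Sum>p\<in>A. d p) = (\<Sum>p\<in>A. card B)" and sB_eq: "(\<Sum>p\<in>B. d p) = (\<Sum>p\<in>B. card A)"
      by (simp_all add: mult.commute)
    have "d p = card B" if "p \<in> A" for p
      using sum_mono_inv[OF sA_eq dA that fin(1)] .
    then have nbrs_A_eq: "nbrs G p \<inter> S = B" if "p \<in> A" for p
      using card_subset_eq[OF fin(2) nbrs_A[OF that]] that by (simp add: d_def)
    have complete: "\<forall>p\<in>A. \<forall>q\<in>B. adj G p q"
      using nbrs_A_eq by (auto simp: nbrs_def)
    have "nbrs G p \<inter> S = A" if "p \<in> B" for p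
    proof -
      have "A \<subseteq> nbrs G p \<inter> S"
        using complete that AB by (auto simp: nbrs_def adj_sym)
      moreover have "d p = card A"
        using sum_mono_inv[OF sB_eq dB that fin(2)] .
      ultimately show ?thesis
        using card_subset_eq[of "nbrs G p \<inter> S" A] \<open>finite S\<close> by (simp add: d_def)
    qed
    then have "\<forall>p\<in>B. \<forall>q\<in>B. \<not> adj G p q"
      using AB by (auto simp: nbrs_def)
    then show "induces_complete_bipartite G A B"
      using AB complete A_indep by (simp add: induces_complete_bipartite_def)
  qed
qed

lemma card_clique_lists:
  assumes "simple_graph G"
  shows "card {xs. distinct xs \<and> length xs = t \<and> is_clique G (set xs)} = fact t * k_t t G"
proof -
  define cliques where "cliques = {S. is_clique G S \<and> card S = t}"
  have sub: "cliques \<subseteq> Pow (verts G)"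
    by (auto simp: cliques_def is_clique_def)
  have fin: "finite cliques" "\<And>S. S \<in> cliques \<Longrightarrow> finite S"
    using sub finite_verts[OF assms] by (meson finite_Pow_iff rev_finite_subset, meson PowD rev_finite_subset subsetD)
  have "{xs. distinct xs \<and> length xs = t \<and> is_clique G (set xs)} = (\<Union>S\<in>cliques. permutations_of_set S)"
    by (auto simp: cliques_def permutations_of_set_def distinct_card)
  also have "card \<dots> = (\<Sum>S\<in>cliques. card (permutations_of_set S))"
    using fin by (intro card_UN_disjoint) (auto dest: permutations_of_setD)
  also have "\<dots> = (\<Sum>S\<in>cliques. fact t)"
  proof (rule sum.cong)
    fix S assume "S \<in> cliques"
    then have "finite S" "card S = t"
      using fin(2) unfolding cliques_def by blast+
    then show "card (permutations_of_set S) = fact t"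
      by simp
  qed simp
  finally show ?thesis
    by (simp add: k_t_def cliques_def)
qed

lemma distinct_clique_triple_iff:
  assumes "simple_graph G"
  shows "distinct [a, b, c] \<and> is_clique G {a, b, c} \<longleftrightarrow> adj G a b \<and> adj G a c \<and> adj G b c"
proof
  assume "adj G a b \<and> adj G a c \<and> adj G b c"
  then show "distinct [a, b, c] \<and> is_clique G {a, b, c}"
    using adjD[OF assms] adj_sym[of G] unfolding is_clique_iff_adj by auto
qed (simp add: is_clique_iff_adj)

lemma sum_link_size_eq:
  assumes "simple_graph G"
  shows "(\<Sum>v\<in>verts G. link_size G v) = 6 * k_t 3 G"
proof -
  let ?T = "Sigma (verts G) (\<lambda>v. adj_pairs G (nbrs G v))"
  let ?list = "\<lambda>(v, p, q). [v, p, q]"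
  have "(\<Sum>v\<in>verts G. link_size G v) = card ?T"
    using finite_verts[OF assms] finite_nbrs[OF assms] finite_adj_pairs
    by (simp add: link_size_def card_SigmaI)
  also have "\<dots> = card (?list ` ?T)"
    by (rule card_image[symmetric]) (auto simp: inj_on_def)
  also have "?list ` ?T = {xs. distinct xs \<and> length xs = 3 \<and> is_clique G (set xs)}"
  proof (intro equalityI subsetI)
    fix xs assume "xs \<in> ?list ` ?T"
    then obtain v p q where "xs = [v, p, q]" "adj G v p" "adj G v q" "adj G p q"
      by (auto simp: adj_pairs_def nbrs_def)
    then show "xs \<in> {xs. distinct xs \<and> length xs = 3 \<and> is_clique G (set xs)}"
      using distinct_clique_triple_iff[OF assms, of v p q] by simp
  next
    fix xs assume xs: "xs \<in> {xs. distinct xs \<and> length xs = 3 \<and> is_clique G (set xs)}"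
    then obtain a b c where "xs = [a, b, c]"
      by (auto simp: numeral_3_eq_3 length_Suc_conv)
    with xs show "xs \<in> ?list ` ?T"
      using distinct_clique_triple_iff[OF assms, of a b c] adjD[OF assms]
      by (auto simp: adj_pairs_def nbrs_def image_iff)
  qed
  also have "card \<dots> = 6 * k_t 3 G"
    using card_clique_lists[OF assms] by (simp add: numeral_3_eq_3)
  finally show ?thesis .
qed

lemma graph_classD:
  assumes "G \<in> graph_class \<Delta> \<omega>"
  shows "simple_graph G" "card (nbrs G v) \<le> \<Delta>" "clique_number G \<le> \<omega>"
  using assms card_nbrs_le_max_degree[of G v] by (auto simp: graph_class_def)

lemma mult_le_6_if_add_le_5:
  fixes a b :: nat
  assumes "a + b \<le> 5"
  shows "a * b \<le> 6" and "a * b = 6 \<Longrightarrow> a = 2 \<and> b = 3 \<or> a = 3 \<and> b = 2"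
proof -
  consider "a = 0" | "a = 1" | "a = 2" | "a = 3" | "a = 4" | "a = 5"
    using assms by linarith
  then show "a * b \<le> 6" and "a * b = 6 \<Longrightarrow> a = 2 \<and> b = 3 \<or> a = 3 \<and> b = 2"
    using assms by (cases; simp)+
qed

lemma link_size_le_12:
  assumes G: "G \<in> graph_class 5 3"
  shows "link_size G v \<le> 12"
    and "link_size G v = 12 \<Longrightarrow>
      \<exists>A B. nbrs G v = A \<union> B \<and> induces_complete_bipartite G A B \<and> card A = 2 \<and> card B = 3"
proof -
  note sg = graph_classD(1)[OF G]
  obtain A B where AB: "A \<union> B = nbrs G v" "A \<inter> B = {}"
    and le: "card (adj_pairs G (nbrs G v)) \<le> 2 * card A * card B"
    and tight: "card (adj_pairs G (nbrs G v)) = 2 * card A * card B \<Longrightarrow> induces_complete_bipartite G A B"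
  proof (rule triangle_free_split[OF finite_nbrs[OF sg, of v], where G = G])
    fix p q r assume "p \<in> nbrs G v" "q \<in> nbrs G v" "r \<in> nbrs G v" "adj G p q" "adj G p r" "adj G q r"
    then show False
      by (rule nbrs_triangle_free[OF sg graph_classD(3)[OF G]])
  qed (rule that)
  have "finite A" "finite B"
    using AB(1) finite_nbrs[OF sg, of v] finite_Un by metis+
  then have "card A + card B \<le> 5"
    using graph_classD(2)[OF G, of v] AB card_Un_disjoint[of A B] by simp
  note small = mult_le_6_if_add_le_5[OF this]
  show "link_size G v \<le> 12"
    using le small(1) unfolding link_size_def by linarith
  assume "link_size G v = 12"
  then have "card A * card B = 6" "induces_complete_bipartite G A B"
    using le small(1) tight unfolding link_size_def by simp_all
  with small(2) consider "card A = 2" "card B = 3" | "card B = 2" "card A = 3"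
    by blast
  then show "\<exists>A B. nbrs G v = A \<union> B \<and> induces_complete_bipartite G A B \<and> card A = 2 \<and> card B = 3"
  proof cases
    case 1
    then show ?thesis
      using AB(1) \<open>induces_complete_bipartite G A B\<close> by blast
  next
    case 2
    then show ?thesis
      using AB(1) induces_complete_bipartite_sym[OF \<open>induces_complete_bipartite G A B\<close>]
      by (metis Un_commute)
  qed
qed

lemma even_link_size: "simple_graph G \<Longrightarrow> even (link_size G v)"
  unfolding link_size_def by (rule even_card_adj_pairs[OF _ finite_nbrs])

lemma link_size_le_10:
  assumes "G \<in> graph_class 5 3" "link_size G v \<noteq> 12"
  shows "link_size G v \<le> 10"
  using assms(2) link_size_le_12(1)[OF assms(1), of v] even_link_size[OF graph_classD(1)[OF assms(1)], of v]
  by presburger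

text \<open>If the link of v is K_{2,3} with parts P and Q, then a vertex c of Q cannot have a
  K_{2,3} link as well: v would lie in one part of it, and the other part would be P; but
  each vertex of P already has the 4 neighbours v and Q outside the link of c.\<close>
lemma link_size_le_10_if_nbr_of_K23:
  assumes G: "G \<in> graph_class 5 3"
    and split: "nbrs G v = P \<union> Q" "induces_complete_bipartite G P Q" "card P = 2" "card Q = 3"
    and c: "c \<in> Q"
  shows "link_size G c \<le> 10"
proof -
  note sg = graph_classD(1)[OF G]
  have Q_c: "Q \<inter> nbrs G c = {}"
    using split(2) c by (auto simp: induces_complete_bipartite_def nbrs_def)
  have v_c: "v \<in> nbrs G c"
    using split(1) c by (auto simp: nbrs_def adj_sym)
  have "P \<subseteq> nbrs G c"
    using split(2) c by (auto simp: induces_complete_bipartite_def nbrs_def adj_sym)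
  then have v_c_P: "nbrs G v \<inter> nbrs G c = P"
    using split(1) Q_c by blast
  have P_small: "card (nbrs G a \<inter> nbrs G c) \<le> 2" if "a \<in> P" for a
  proof -
    have "Q \<subseteq> nbrs G a"
      using split(2) that by (auto simp: induces_complete_bipartite_def nbrs_def)
    then have "card (nbrs G a - Q) \<le> 2"
      using graph_classD(2)[OF G, of a] split(4) card_Diff_subset[OF _ \<open>Q \<subseteq> nbrs G a\<close>]
        finite_subset[OF \<open>Q \<subseteq> nbrs G a\<close> finite_nbrs[OF sg]] by simp
    moreover have "nbrs G a \<inter> nbrs G c \<subseteq> nbrs G a - Q"
      using Q_c by blast
    ultimately show ?thesis
      using finite_nbrs[OF sg, of a] by (meson card_mono finite_Diff le_trans)
  qed
  show ?thesis
  proof (rule link_size_le_10[OF G], rule notI)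
    assume "link_size G c = 12"
    then obtain A B where AB: "nbrs G c = A \<union> B" "induces_complete_bipartite G A B" "card A = 2" "card B = 3"
      using link_size_le_12(2)[OF G, of c] by blast
    show False
    proof (cases "v \<in> A")
      case True
      then have "B = P"
        using nbrs_inter_complete_bipartite[OF AB(2) True] AB(1) v_c_P by simp
      then show False
        using AB(4) split(3) by simp
    next
      case False
      then have "A = P"
        using nbrs_inter_complete_bipartite[OF induces_complete_bipartite_sym[OF AB(2)], of v]
          AB(1) v_c v_c_P by (simp add: Un_commute)
      obtain a where "a \<in> P"
        using split(3) by fastforce
      then have "nbrs G a \<inter> nbrs G c = B"
        using nbrs_inter_complete_bipartite[OF AB(2)] \<open>A = P\<close> AB(1) by simp
      then show False
        using P_small[OF \<open>a \<in> P\<close>] AB(4) by simp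
    qed
  qed
qed

lemma card_deficient_nbrs:
  assumes G: "G \<in> graph_class 5 3" and full: "link_size G w = 12"
  shows "3 \<le> card {c \<in> nbrs G w. link_size G c \<le> 10}"
proof -
  obtain P Q where PQ: "nbrs G w = P \<union> Q" "induces_complete_bipartite G P Q" "card P = 2" "card Q = 3"
    using link_size_le_12(2)[OF G full] by blast
  then have "Q \<subseteq> {c \<in> nbrs G w. link_size G c \<le> 10}"
    using link_size_le_10_if_nbr_of_K23[OF G PQ] by auto
  then show ?thesis
    using card_mono[OF _ \<open>Q \<subseteq> _\<close>] finite_nbrs[OF graph_classD(1)[OF G]] PQ(4) by simp
qed

lemma card_full_vertices_le:
  assumes G: "G \<in> graph_class 5 3"
  shows "3 * card {v \<in> verts G. link_size G v = 12} \<le> 5 * card {v \<in> verts G. link_size G v \<noteq> 12}"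
    (is "3 * card ?F \<le> 5 * card ?M")
proof -
  note sg = graph_classD(1)[OF G]
  have fin: "finite ?F" "finite ?M"
    using finite_verts[OF sg] by simp_all
  define sends where "sends = Sigma ?F (\<lambda>w. nbrs G w \<inter> ?M)"
  have "(\<Sum>w\<in>?F. 3) \<le> (\<Sum>w\<in>?F. card (nbrs G w \<inter> ?M))"
  proof (rule sum_mono)
    fix w assume "w \<in> ?F"
    moreover have "{c \<in> nbrs G w. link_size G c \<le> 10} \<subseteq> nbrs G w \<inter> ?M"
      using nbrs_subset_verts[OF sg] by auto
    ultimately show "3 \<le> card (nbrs G w \<inter> ?M)"
      using card_deficient_nbrs[OF G, of w] card_mono[OF _ \<open>_ \<subseteq> nbrs G w \<inter> ?M\<close>]
        finite_nbrs[OF sg, of w] by fastforce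
  qed
  also have "\<dots> = card sends"
    unfolding sends_def using fin finite_nbrs[OF sg] by (simp add: card_SigmaI)
  also have "\<dots> = card (prod.swap ` sends)"
    by (simp add: card_image)
  also have "\<dots> \<le> card (Sigma ?M (nbrs G))"
    using fin finite_nbrs[OF sg]
    by (intro card_mono) (auto simp: sends_def nbrs_def adj_sym)
  also have "\<dots> = (\<Sum>c\<in>?M. card (nbrs G c))"
    using fin finite_nbrs[OF sg] by (simp add: card_SigmaI)
  also have "\<dots> \<le> 5 * card ?M"
    using sum_bounded_above[of ?M "\<lambda>c. card (nbrs G c)" 5] graph_classD(2)[OF G] by simp
  finally show ?thesis
    by (simp add: mult.commute)
qed

lemma triangle_density_le:
  assumes G: "G \<in> graph_class 5 3"
  shows "8 * k_t 3 G \<le> 15 * card (verts G)"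
proof -
  note sg = graph_classD(1)[OF G]
  define F where "F = {v \<in> verts G. link_size G v = 12}"
  define M where "M = {v \<in> verts G. link_size G v \<noteq> 12}"
  have VFM: "verts G = F \<union> M" "F \<inter> M = {}" "finite F" "finite M"
    using finite_verts[OF sg] by (auto simp: F_def M_def)
  have M_le_10: "link_size G v \<le> 10" if "v \<in> M" for v
    using that link_size_le_10[OF G] by (simp add: M_def)
  have "6 * k_t 3 G = (\<Sum>v\<in>verts G. link_size G v)"
    using sum_link_size_eq[OF sg] by simp
  also have "\<dots> = (\<Sum>v\<in>F. link_size G v) + (\<Sum>v\<in>M. link_size G v)"
    unfolding VFM(1) by (rule sum.union_disjoint[OF VFM(3,4,2)])
  also have "\<dots> \<le> 12 * card F + 10 * card M"
    using sum_bounded_above[of F "link_size G" 12] sum_bounded_above[of M "link_size G" 10] M_le_10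
    by (fastforce simp: F_def intro: add_mono)
  finally have "6 * k_t 3 G \<le> 12 * card F + 10 * card M" .
  moreover have "3 * card F \<le> 5 * card M"
    using card_full_vertices_le[OF G] by (simp add: F_def M_def)
  moreover have "card (verts G) = card F + card M"
    using VFM card_Un_disjoint by metis
  ultimately show ?thesis
    by linarith
qed

lemma verts_C5_join_I3: "verts (join C5 I3) = {0,1,2,3,4,5,6,7}"
  by (auto simp: join_def C5_def I3_def verts_def)

lemma edges_C5_join_I3:
  "edges (join C5 I3) = {{0,1},{1,2},{2,3},{3,4},{4,0}} \<union> (\<lambda>(a, b). {a, b}) ` ({0,1,2,3,4} \<times> {5,6,7})"
proof -
  have "{i::nat. i < 5} = {0,1,2,3,4}"
    by auto
  moreover have "{{i, (i + 1) mod 5} | i::nat. i < 5} = (\<lambda>i. {i, (i + 1) mod 5}) ` {i. i < 5}"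
    by blast
  ultimately have cycle: "{{i, (i + 1) mod 5} | i::nat. i < 5} = {{0,1},{1,2},{2,3},{3,4},{4,0}}"
    by (simp add: numeral_2_eq_2)
  have "{0..4::nat} = {0,1,2,3,4}"
    by auto
  then have "verts C5 = {0,1,2,3,4}" "verts I3 = {5,6,7}"
    and "edges C5 = {{0,1},{1,2},{2,3},{3,4},{4,0}}" "edges I3 = {}"
    using cycle by (simp_all add: C5_def I3_def verts_def edges_def)
  moreover have "{{a, b} | a b. a \<in> verts C5 \<and> b \<in> verts I3} = (\<lambda>(a, b). {a, b}) ` (verts C5 \<times> verts I3)"
    by auto
  ultimately show ?thesis
    by (simp add: join_def edges_def)
qed

lemma nbrs_C5_join_I3:
  "nbrs (join C5 I3) v =
    (if v < 5 then {(v + 1) mod 5, (v + 4) mod 5, 5, 6, 7} else if v \<le> 7 then {0,1,2,3,4} else {})"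
proof -
  consider "v = 0" | "v = 1" | "v = 2" | "v = 3" | "v = 4" | "v = 5" | "v = 6" | "v = 7" | "7 < v"
    by linarith
  then show ?thesis
    unfolding nbrs_def adj_def edges_C5_join_I3
    by cases (auto simp: doubleton_eq_iff)
qed

lemma simple_graph_C5_join_I3: "simple_graph (join C5 I3)"
  unfolding simple_graph_def verts_C5_join_I3 edges_C5_join_I3 by auto

lemma max_degree_C5_join_I3: "max_degree (join C5 I3) \<le> 5"
proof (rule max_degree_le[OF simple_graph_C5_join_I3])
  fix v
  show "card (nbrs (join C5 I3) v) \<le> 5"
    using card_length[of "[(v + 1) mod 5, (v + 4) mod 5, 5, 6, 7]"] card_length[of "[0, 1, 2, 3, 4::nat]"]
    by (simp add: nbrs_C5_join_I3)
qed

lemma card_clique_C5_join_I3: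
  assumes S: "is_clique (join C5 I3) S"
  shows "card S \<le> 3"
proof -
  let ?J = "join C5 I3"
  have adj: "adj ?J u w" if "u \<in> S" "w \<in> S" "u \<noteq> w" for u w
    using S that by (simp add: is_clique_iff_adj)
  define L where "L = S \<inter> {0,1,2,3,4}"
  define H where "H = S \<inter> {5,6,7}"
  have "S = L \<union> H" "finite L" "finite H"
    using S by (auto simp: L_def H_def is_clique_def verts_C5_join_I3)
  have "card H \<le> 1"
    unfolding One_nat_def card_le_Suc0_iff_eq[OF \<open>finite H\<close>]
  proof (intro ballI)
    fix x y assume "x \<in> H" "y \<in> H"
    then show "x = y"
      using adj[of x y] by (auto simp: H_def adj_iff_in_nbrs nbrs_C5_join_I3)
  qed
  moreover have "card L \<le> 2"
  proof (rule ccontr)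
    assume "\<not> card L \<le> 2"
    then obtain T where "T \<subseteq> L" "card T = 3"
      using obtain_subset_with_card_n[of 3 L] by auto
    then obtain x y z where xyz: "{x, y, z} \<subseteq> L" "x \<noteq> y" "y \<noteq> z" "x \<noteq> z"
      by (auto simp: card_3_iff)
    then have "adj ?J x y" "adj ?J y z" "adj ?J x z" "x < 5" "y < 5" "z < 5"
      using adj by (auto simp: L_def)
    moreover have "x = 0 \<or> x = 1 \<or> x = 2 \<or> x = 3 \<or> x = 4"
      using \<open>x < 5\<close> by linarith
    ultimately show False
      using xyz(2-4) by (auto simp: adj_iff_in_nbrs nbrs_C5_join_I3)
  qed
  ultimately show "card S \<le> 3"
    using \<open>S = L \<union> H\<close> card_Un_le[of L H] by simp
qed

lemma C5_join_I3_in_graph_class: "join C5 I3 \<in> graph_class 5 3"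
  using max_degree_C5_join_I3 clique_number_le[OF simple_graph_C5_join_I3 card_clique_C5_join_I3]
  by (simp add: graph_class_def simple_graph_C5_join_I3)

lemma triangles_C5_join_I3: "k_t 3 (join C5 I3) = 15"
proof -
  have "(\<Sum>v\<in>verts (join C5 I3). link_size (join C5 I3) v) = 90"
    by (simp add: verts_C5_join_I3 link_size_def card_adj_pairs nbrs_C5_join_I3)
  then show ?thesis
    using sum_link_size_eq[OF simple_graph_C5_join_I3] by simp
qed

lemma rho_3_le:
  assumes "G \<in> graph_class 5 3"
  shows "rho 3 G \<le> 15 / 8"
proof (cases "card (verts G) = 0")
  case False
  have "real (8 * k_t 3 G) \<le> real (15 * card (verts G))"
    using triangle_density_le[OF assms] by (simp only: of_nat_le_iff)
  with False show ?thesis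
    by (simp add: rho_def divide_le_eq)
qed (simp add: rho_def)

theorem mainTheorem17:
  shows "f_t 3 5 3 = 15 / 8 \<and> rho 3 (join C5 I3) = 15 / 8"
proof -
  have rho_C5_join_I3: "rho 3 (join C5 I3) = 15 / 8"
    by (simp add: rho_def triangles_C5_join_I3 verts_C5_join_I3)
  have "f_t 3 5 3 = 15 / 8"
    unfolding f_t_def
  proof (rule cSup_eq_maximum)
    have "1 \<le> card (verts (join C5 I3))"
      by (simp add: verts_C5_join_I3)
    then show "15 / 8 \<in> {rho 3 G | G. G \<in> graph_class 5 3 \<and> 1 \<le> card (verts G)}"
      using C5_join_I3_in_graph_class rho_C5_join_I3[symmetric] by blast
  next
    fix x assume "x \<in> {rho 3 G | G. G \<in> graph_class 5 3 \<and> 1 \<le> card (verts G)}"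
    then show "x \<le> 15 / 8"
      using rho_3_le by blast
  qed
  with rho_C5_join_I3 show ?thesis
    by simp
qed

end
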